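(* Let $n>2$ be odd and let $\mathbf{A}_n$ be the algebra defined below. For every $(n-1)$-element subset $E$ of $A_n$ there is a term operation $t$ of $\mathbf{A}_n$ satisfying $t(y,x,x)=t(x,y,x)=t(x,x,y)=y$ for all $x,y\in E$.
   Context: Let $[n]=\{1,\dots,n\}$ and let $m$ be the minority operation on $[n]$ given by $m(x,y,z)=x$ if $y=z$, $m(x,y,z)=y$ if $x=z$, and $m(x,y,z)=z$ otherwise. On $\{0,1,2,3\}$, $+,-$ denote arithmetic modulo 4 and $\oplus$ denotes bitwise XOR of 2-bit binary representations. Let $A_n=[n]\times\{0,1,2,3\}$. For $i\in[n]$ define the ternary operation $t_i$ on $A_n$ by $t_i((a_1,b_1),(a_2,b_2),(a_3,b_3))=(i,\,b_1-b_2+b_3)$ if $a_1=a_2=a_3=i$, and $=(m(a_1,a_2,a_3),\,b_1\oplus b_2\oplus b_3)$ otherwise. The algebra $\mathbf{A}_n$ has universe $A_n$ and basic operations $t_1,\dots,t_n$. *)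

theory Defs
  imports Main
begin

type_synonym elem = "nat \<times> nat"

definition minority :: "nat \<Rightarrow> nat \<Rightarrow> nat \<Rightarrow> nat" where
  "minority x y z = (if y = z then x else if x = z then y else z)"

definition carrierA :: "nat \<Rightarrow> elem set" where
  "carrierA n = {1..n} \<times> {0..3}"

(* b1 - b2 + b3 modulo 4; for b2 \<le> 3 this is exactly arithmetic mod 4 *)
definition top_op :: "nat \<Rightarrow> elem \<Rightarrow> elem \<Rightarrow> elem \<Rightarrow> elem" where
  "top_op i p q r =
     (let (a1, b1) = p; (a2, b2) = q; (a3, b3) = r in
      if a1 = i \<and> a2 = i \<and> a3 = i then (i, (b1 + (4 - b2) + b3) mod 4)
      else (minority a1 a2 a3, xor (xor b1 b2) b3))"

inductive_set term3 :: "nat \<Rightarrow> (elem \<Rightarrow> elem \<Rightarrow> elem \<Rightarrow> elem) set" for n where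
  proj1: "(\<lambda>x y z. x) \<in> term3 n"
| proj2: "(\<lambda>x y z. y) \<in> term3 n"
| proj3: "(\<lambda>x y z. z) \<in> term3 n"
| app: "\<lbrakk>i \<in> {1..n}; f \<in> term3 n; g \<in> term3 n; h \<in> term3 n\<rbrakk>
        \<Longrightarrow> (\<lambda>x y z. top_op i (f x y z) (g x y z) (h x y z)) \<in> term3 n"

end

theory Submission
  imports Defs
begin

text \<open>An \<open>(n-1)\<close>-element set \<open>E\<close> cannot meet all \<open>n\<close> blocks \<open>{i} \<times> {0..3}\<close>, and on
  elements outside block \<open>i\<close> the basic operation \<open>t\<^sub>i\<close> is the minority operation on
  first coordinates and \<open>b\<^sub>1 \<oplus> b\<^sub>2 \<oplus> b\<^sub>3\<close> on second coordinates, which is again a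
  minority operation. So \<open>t\<^sub>i\<close> itself works.\<close>

definition minority_on :: "('a \<Rightarrow> 'a \<Rightarrow> 'a \<Rightarrow> 'a) \<Rightarrow> 'a set \<Rightarrow> bool" where
  "minority_on t S \<longleftrightarrow> (\<forall>x\<in>S. \<forall>y\<in>S. t y x x = y \<and> t x y x = y \<and> t x x y = y)"

lemma exists_not_in_image_if_card_less:
  assumes "finite E" and "card E < card A"
  shows "\<exists>a\<in>A. a \<notin> f ` E"
proof (rule ccontr)
  assume "\<not> (\<exists>a\<in>A. a \<notin> f ` E)"
  then have "A \<subseteq> f ` E" by blast
  then have "card A \<le> card (f ` E)" using assms(1) by (intro card_mono) auto
  also have "\<dots> \<le> card E" using assms(1) by (rule card_image_le)
  finally show False using assms(2) by simp
qed

lemma xor_cancel_left: "xor a (xor a b) = (b :: nat)" "xor a (xor b a) = (b :: nat)"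
  by (metis xor.assoc xor.left_neutral xor_self_eq, metis xor.assoc xor.commute xor.left_neutral xor_self_eq)

lemma top_op_in_term3: "i \<in> {1..n} \<Longrightarrow> top_op i \<in> term3 n"
  using term3.app[OF _ term3.proj1 term3.proj2 term3.proj3, of i n] by simp

lemma top_op_minority_on_off_block:
  assumes "i \<notin> fst ` S"
  shows "minority_on (top_op i) S"
  unfolding minority_on_def
proof (intro ballI)
  fix x y assume "x \<in> S" "y \<in> S"
  moreover obtain a b c d where "x = (a, b)" "y = (c, d)" by fastforce
  ultimately have "a \<noteq> i" "c \<noteq> i" "x = (a, b)" "y = (c, d)"
    using assms by force+
  then show "top_op i y x x = y \<and> top_op i x y x = y \<and> top_op i x x y = y"
    by (simp add: top_op_def minority_def xor.assoc xor.left_commute xor_cancel_left)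
qed

theorem claim5p3:
  fixes n :: nat and E :: "elem set"
  assumes "odd n" and "n > 2"
    and "E \<subseteq> carrierA n" and "card E = n - 1"
  shows "\<exists>t \<in> term3 n. \<forall>x\<in>E. \<forall>y\<in>E.
           t y x x = y \<and> t x y x = y \<and> t x x y = y"
proof -
  have "finite E" using assms(2,4) card.infinite by fastforce
  moreover have "card E < card {1..n}" using assms(2,4) by simp
  ultimately obtain i where "i \<in> {1..n}" "i \<notin> fst ` E"
    using exists_not_in_image_if_card_less by blast
  then have "top_op i \<in> term3 n" "minority_on (top_op i) E"
    by (simp_all add: top_op_in_term3 top_op_minority_on_off_block)
  then show ?thesis unfolding minority_on_def by blast
qed

end
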